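(* Let $\varepsilon,\delta>0$ and let $A\subseteq\mathbb{F}_2^n$ be nonempty. Let $m=\log_2|\mathrm{span}(A)|$ and $k=\lceil 2m/\varepsilon\rceil\cdot\lceil\log_2(1/\delta)\rceil$. If $v_1,\dots,v_k$ are independent uniformly random elements of $A$, then with probability at least $1-\delta$, $$|A\cap\mathrm{span}(\{v_1,\dots,v_k\})|\ge(1-\varepsilon)|A|.$$
   Context: $\mathrm{span}(S)$ denotes the $\mathbb{F}_2$-linear span of $S$. *)

theory Defs
  imports "HOL-Probability.Probability" "HOL-Library.Z2"
begin

end

theory Submission
  imports Defs
begin

(* Follow the potential log2 |span S| while S grows by the samples. It never decreases, stays
   below m on subsets of A, and grows by exactly 1 when the new sample leaves span S; as long as
   fewer than (1 - \<epsilon>)|A| elements of A lie in span S, this happens with probability more than \<epsilon>.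
   Hence the expected number of steps at which the span is still "uncovered" is at most m/\<epsilon>.
   Being covered survives further sampling, so after s = \<lceil>2m/\<epsilon>\<rceil> steps the span is uncovered
   with probability at most 1/2; a larger starting span only helps, so each further block of
   s steps halves this probability again, and \<lceil>log2 (1/\<delta>)\<rceil> blocks push it below \<delta>. *)

instance bit :: finite
proof
  have "(UNIV :: bit set) = {0, 1}"
    using bit_not_zero_iff by blast
  then show "finite (UNIV :: bit set)"
    by (metis finite.emptyI finite.insertI)
qed

lemma card_span_pos: "card (vec.span (S :: (bit ^ 'n) set)) > 0"
  using vec.span_zero by (auto simp: card_gt_0_iff)

lemma card_span_insert_notin:
  fixes x :: "bit ^ 'n"
  assumes "x \<notin> vec.span S"
  shows "card (vec.span (insert x S)) = 2 * card (vec.span S)"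
proof -
  have span_insert: "vec.span (insert x S) = vec.span S \<union> (\<lambda>y. y + x) ` vec.span S"
  proof (rule set_eqI, rule iffI)
    fix y assume "y \<in> vec.span (insert x S)"
    then obtain c where c: "y - c *s x \<in> vec.span S"
      by (auto simp: vec.span_insert)
    show "y \<in> vec.span S \<union> (\<lambda>y. y + x) ` vec.span S"
    proof (cases "c = 0")
      case True
      with c show ?thesis by simp
    next
      case False
      then have "c = 1" by simp
      with c show ?thesis by (auto intro!: image_eqI[of _ _ "y - x"])
    qed
  next
    fix y assume "y \<in> vec.span S \<union> (\<lambda>y. y + x) ` vec.span S"
    then show "y \<in> vec.span (insert x S)"
      by (auto simp: vec.span_insert intro: exI[of _ 0] exI[of _ 1])
  qed
  have disjoint: "vec.span S \<inter> (\<lambda>y. y + x) ` vec.span S = {}"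
  proof safe
    fix y assume "y + x \<in> vec.span S" "y \<in> vec.span S"
    then have "(y + x) - y \<in> vec.span S" by (rule vec.span_diff)
    with assms show "y + x \<in> {}" by simp
  qed
  have "card (vec.span (insert x S)) = card (vec.span S) + card ((\<lambda>y. y + x) ` vec.span S)"
    unfolding span_insert using disjoint by (simp add: card_Un_disjoint)
  also have "card ((\<lambda>y. y + x) ` vec.span S) = card (vec.span S)"
    by (rule card_image) (auto simp: inj_on_def)
  finally show ?thesis by simp
qed

lemma log_card_span_insert:
  fixes x :: "bit ^ 'n"
  shows "log 2 (card (vec.span (insert x S)))
           = log 2 (card (vec.span S)) + of_bool (x \<notin> vec.span S)"
proof (cases "x \<in> vec.span S")
  case True
  then show ?thesis by (simp add: vec.span_redundant)
next
  case False
  have "log 2 (real (2 * card (vec.span S))) = 1 + log 2 (card (vec.span S))"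
    using card_span_pos[of S] unfolding of_nat_mult by (subst log_mult) auto
  with False show ?thesis by (simp add: card_span_insert_notin)
qed

primrec iter_avg :: "'a set \<Rightarrow> nat \<Rightarrow> ('a set \<Rightarrow> real) \<Rightarrow> 'a set \<Rightarrow> real" where
  "iter_avg A 0 f S = f S"
| "iter_avg A (Suc j) f S = (\<Sum>x\<in>A. iter_avg A j f (insert x S)) / card A"

lemma expectation_Pi_pmf_of_set:
  assumes "finite A" "A \<noteq> {}"
  shows "measure_pmf.expectation (Pi_pmf {..<k} d (\<lambda>_. pmf_of_set A)) (\<lambda>v. f (S \<union> v ` {..<k}))
           = iter_avg A k f S"
proof (induction k arbitrary: S)
  case 0
  then show ?case by simp
next
  case (Suc k)
  let ?P = "Pi_pmf {..<k} d (\<lambda>_. pmf_of_set A)"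
  have Pi_Suc: "Pi_pmf {..<Suc k} d (\<lambda>_. pmf_of_set A)
                  = pmf_of_set A \<bind> (\<lambda>y. map_pmf (\<lambda>v. v(k := y)) ?P)"
    unfolding lessThan_Suc by (subst Pi_pmf_insert') (auto simp: map_pmf_def)
  have finite_support: "finite (set_pmf (map_pmf (\<lambda>v. v(k := y)) ?P))" for y
    using assms by (auto simp: set_Pi_pmf intro!: finite_imageI finite_PiE_dflt)
  have upd: "S \<union> v(k := y) ` {..<Suc k} = insert y S \<union> v ` {..<k}" for v y
    unfolding lessThan_Suc by (auto simp: fun_upd_image)
  have "measure_pmf.expectation (Pi_pmf {..<Suc k} d (\<lambda>_. pmf_of_set A))
          (\<lambda>v. f (S \<union> v ` {..<Suc k}))
        = (\<Sum>y\<in>A. measure_pmf.expectation ?P (\<lambda>v. f (insert y S \<union> v ` {..<k}))) / card A"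
    by (simp only: Pi_Suc pmf_expectation_bind_pmf_of_set[OF assms(2,1) finite_support]
        integral_map_pmf upd) (simp add: sum_distrib_left divide_inverse_commute)
  then show ?case
    by (simp only: Suc.IH iter_avg.simps)
qed

lemma iter_avg_add: "iter_avg A (i + j) f S = iter_avg A i (iter_avg A j f) S"
  by (induction i arbitrary: S) simp_all

lemma iter_avg_mono_on:
  assumes "\<And>T. S \<subseteq> T \<Longrightarrow> T \<subseteq> S \<union> A \<Longrightarrow> f T \<le> g T"
  shows "iter_avg A j f S \<le> iter_avg A j g S"
  using assms
proof (induction j arbitrary: S)
  case 0
  then show ?case by simp
next
  case (Suc j)
  have "iter_avg A j f (insert x S) \<le> iter_avg A j g (insert x S)" if "x \<in> A" for x
    by (rule Suc.IH) (use Suc.prems that in auto)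
  then show ?case by (simp add: sum_mono divide_right_mono)
qed

lemma iter_avg_nonneg: "(\<And>T. 0 \<le> f T) \<Longrightarrow> 0 \<le> iter_avg A j f S"
  by (induction j arbitrary: S) (simp_all add: sum_nonneg)

lemma iter_avg_cmult: "iter_avg A j (\<lambda>T. c * f T) S = c * iter_avg A j f S"
  by (induction j arbitrary: S) (simp_all add: sum_distrib_left)

lemma iter_avg_diff: "iter_avg A j (\<lambda>T. f T - g T) S = iter_avg A j f S - iter_avg A j g S"
  by (induction j arbitrary: S) (simp_all add: sum_subtractf diff_divide_distrib)

lemma iter_avg_const:
  assumes "finite A" "A \<noteq> {}"
  shows "iter_avg A j (\<lambda>_. c) S = c"
  using assms by (induction j arbitrary: S) simp_all

lemma iter_avg_potential_bound:
  assumes "\<And>T. c * g T \<le> iter_avg A 1 \<Phi> T - \<Phi> T"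
  shows "c * (\<Sum>i<j. iter_avg A i g S) \<le> iter_avg A j \<Phi> S - \<Phi> S"
proof (induction j)
  case 0
  then show ?case by simp
next
  case (Suc j)
  have "c * iter_avg A j g S \<le> iter_avg A j (\<lambda>T. iter_avg A 1 \<Phi> T - \<Phi> T) S"
    unfolding iter_avg_cmult[symmetric] by (rule iter_avg_mono_on) (rule assms)
  also have "\<dots> = iter_avg A j (iter_avg A 1 \<Phi>) S - iter_avg A j \<Phi> S"
    by (rule iter_avg_diff)
  also have "iter_avg A j (iter_avg A 1 \<Phi>) S = iter_avg A (Suc j) \<Phi> S"
    by (simp only: Suc_eq_plus1 iter_avg_add)
  finally show ?case
    using Suc.IH by (simp add: distrib_left)
qed

definition span_covers :: "(bit ^ 'n) set \<Rightarrow> real \<Rightarrow> (bit ^ 'n) set \<Rightarrow> bool" where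
  "span_covers A \<epsilon> T \<longleftrightarrow> (1 - \<epsilon>) * card A \<le> card (A \<inter> vec.span T)"

definition uncovered :: "(bit ^ 'n) set \<Rightarrow> real \<Rightarrow> (bit ^ 'n) set \<Rightarrow> real" where
  "uncovered A \<epsilon> T = of_bool (\<not> span_covers A \<epsilon> T)"

lemma span_covers_mono:
  assumes "vec.span S \<subseteq> vec.span T" and "span_covers A \<epsilon> S"
  shows "span_covers A \<epsilon> T"
proof -
  have "card (A \<inter> vec.span S) \<le> card (A \<inter> vec.span T)"
    using assms(1) by (intro card_mono) auto
  then show ?thesis
    using assms(2) unfolding span_covers_def by linarith
qed

lemma uncovered_antimono:
  "vec.span S \<subseteq> vec.span T \<Longrightarrow> uncovered A \<epsilon> T \<le> uncovered A \<epsilon> S"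
  by (cases "span_covers A \<epsilon> S") (auto simp: uncovered_def dest: span_covers_mono)

lemma uncovered_le_escape:
  "\<epsilon> * uncovered A \<epsilon> T \<le> card (A - vec.span T) / card A"
proof (cases "span_covers A \<epsilon> T")
  case True
  then show ?thesis by (simp add: uncovered_def)
next
  case False
  have "card A = card (A \<inter> vec.span T) + card (A - vec.span T)"
    by (simp add: card_Int_Diff)
  with False have "\<epsilon> * card A < card (A - vec.span T)"
    unfolding span_covers_def by (simp add: algebra_simps)
  moreover from False have "card A > 0"
    unfolding span_covers_def by (auto intro: ccontr)
  ultimately show ?thesis
    using False by (simp add: uncovered_def field_simps)
qed

lemma iter_avg_log_card_span:
  fixes A :: "(bit ^ 'n) set"
  assumes "A \<noteq> {}"
  shows "iter_avg A 1 (\<lambda>T. log 2 (card (vec.span T))) S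
           = log 2 (card (vec.span S)) + card (A - vec.span S) / card A"
proof -
  have "A \<inter> {x. x \<notin> vec.span S} = A - vec.span S"
    by blast
  then show ?thesis
    using assms by (simp add: log_card_span_insert sum.distrib add_divide_distrib)
qed

lemma sum_iter_avg_uncovered_le_log_card_span:
  fixes A :: "(bit ^ 'n) set"
  assumes "A \<noteq> {}"
  shows "\<epsilon> * (\<Sum>i<j. iter_avg A i (uncovered A \<epsilon>) {}) \<le> log 2 (card (vec.span A))"
proof -
  define \<Phi> :: "(bit ^ 'n) set \<Rightarrow> real" where "\<Phi> = (\<lambda>T. log 2 (card (vec.span T)))"
  have "\<epsilon> * uncovered A \<epsilon> T \<le> iter_avg A 1 \<Phi> T - \<Phi> T" for T
    using uncovered_le_escape[of \<epsilon> A T]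
    unfolding \<Phi>_def iter_avg_log_card_span[OF assms] by simp
  then have "\<epsilon> * (\<Sum>i<j. iter_avg A i (uncovered A \<epsilon>) {}) \<le> iter_avg A j \<Phi> {} - \<Phi> {}"
    by (rule iter_avg_potential_bound)
  also have "\<Phi> {} = 0"
    by (simp add: \<Phi>_def vec.span_empty)
  also have "iter_avg A j \<Phi> {} \<le> iter_avg A j (\<lambda>_. \<Phi> A) {}"
    by (rule iter_avg_mono_on)
      (simp add: \<Phi>_def card_span_pos card_mono vec.span_mono)
  also have "\<dots> = \<Phi> A"
    using assms by (simp add: iter_avg_const)
  finally show ?thesis
    by (simp add: \<Phi>_def)
qed

lemma iter_avg_uncovered_antimono:
  assumes "vec.span S \<subseteq> vec.span T"
  shows "iter_avg A j (uncovered A \<epsilon>) T \<le> iter_avg A j (uncovered A \<epsilon>) S"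
  using assms
proof (induction j arbitrary: S T)
  case 0
  then show ?case by (simp add: uncovered_antimono)
next
  case (Suc j)
  have "vec.span (insert x S) \<subseteq> vec.span (insert x T)" for x
    using Suc.prems by (auto simp: vec.span_insert)
  then show ?case
    using Suc.IH by (simp add: sum_mono divide_right_mono)
qed

lemma iter_avg_uncovered_le:
  assumes "A \<noteq> {}"
  shows "iter_avg A j (uncovered A \<epsilon>) S \<le> uncovered A \<epsilon> S"
proof -
  have "iter_avg A j (uncovered A \<epsilon>) S \<le> iter_avg A j (\<lambda>_. uncovered A \<epsilon> S) S"
    by (rule iter_avg_mono_on) (simp add: uncovered_antimono vec.span_mono)
  then show ?thesis
    using assms by (simp add: iter_avg_const)
qed

lemma iter_avg_uncovered_decreasing:
  assumes "A \<noteq> {}" and "i \<le> j"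
  shows "iter_avg A j (uncovered A \<epsilon>) S \<le> iter_avg A i (uncovered A \<epsilon>) S"
proof -
  have "iter_avg A j (uncovered A \<epsilon>) S = iter_avg A i (iter_avg A (j - i) (uncovered A \<epsilon>)) S"
    using assms(2) iter_avg_add[of A i "j - i"] by simp
  also have "\<dots> \<le> iter_avg A i (uncovered A \<epsilon>) S"
    by (intro iter_avg_mono_on iter_avg_uncovered_le assms(1))
  finally show ?thesis .
qed

lemma of_nat_mult_iter_avg_uncovered_le_sum:
  assumes "A \<noteq> {}"
  shows "real j * iter_avg A j (uncovered A \<epsilon>) S \<le> (\<Sum>i<j. iter_avg A i (uncovered A \<epsilon>) S)"
proof -
  have "(\<Sum>i<j. iter_avg A j (uncovered A \<epsilon>) S) \<le> (\<Sum>i<j. iter_avg A i (uncovered A \<epsilon>) S)"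
    by (intro sum_mono iter_avg_uncovered_decreasing assms) simp
  then show ?thesis by simp
qed

lemma iter_avg_uncovered_le_half:
  fixes A :: "(bit ^ 'n) set"
  assumes "A \<noteq> {}" and "\<epsilon> > 0" and "2 * log 2 (card (vec.span A)) / \<epsilon> \<le> s"
  shows "iter_avg A s (uncovered A \<epsilon>) {} \<le> 1 / 2"
proof (cases "s = 0")
  case True
  have "\<epsilon> * uncovered A \<epsilon> {} \<le> log 2 (card (vec.span A))"
    using sum_iter_avg_uncovered_le_log_card_span[OF assms(1), of \<epsilon> 1] by simp
  also have "\<dots> \<le> 0"
    using assms(2,3) True by (simp add: divide_le_0_iff)
  finally show ?thesis
    using True assms(2) by (simp add: uncovered_def mult_le_0_iff)
next
  case False
  let ?p = "iter_avg A s (uncovered A \<epsilon>) {}"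
  have "\<epsilon> * (s * ?p) \<le> \<epsilon> * (\<Sum>i<s. iter_avg A i (uncovered A \<epsilon>) {})"
    using assms(2) by (intro mult_left_mono of_nat_mult_iter_avg_uncovered_le_sum assms(1)) simp
  also have "\<dots> \<le> log 2 (card (vec.span A))"
    by (rule sum_iter_avg_uncovered_le_log_card_span[OF assms(1)])
  also have "\<dots> \<le> \<epsilon> * (s * (1 / 2))"
    using assms(2,3) by (simp add: field_simps)
  finally show ?thesis
    using False assms(2) by simp
qed

lemma iter_avg_uncovered_blocks:
  assumes "A \<noteq> {}"
  shows "iter_avg A (s * r) (uncovered A \<epsilon>) S \<le> iter_avg A s (uncovered A \<epsilon>) {} ^ r"
proof (induction r arbitrary: S)
  case 0
  then show ?case by (simp add: uncovered_def)
next
  case (Suc r)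
  let ?u = "uncovered A \<epsilon>"
  let ?p = "iter_avg A s ?u {}"
  have "iter_avg A (s * r) ?u T \<le> ?p ^ r * ?u T" for T
  proof (cases "span_covers A \<epsilon> T")
    case True
    then have "?u T = 0" by (simp add: uncovered_def)
    with iter_avg_uncovered_le[OF assms] show ?thesis by (metis mult_zero_right)
  next
    case False
    then have "?u T = 1" by (simp add: uncovered_def)
    with Suc.IH show ?thesis by simp
  qed
  then have "iter_avg A (s * Suc r) ?u S \<le> iter_avg A s (\<lambda>T. ?p ^ r * ?u T) S"
    unfolding mult_Suc_right iter_avg_add by (rule iter_avg_mono_on)
  also have "\<dots> = ?p ^ r * iter_avg A s ?u S"
    by (rule iter_avg_cmult)
  also have "\<dots> \<le> ?p ^ r * ?p"
    by (intro mult_left_mono iter_avg_uncovered_antimono zero_le_power iter_avg_nonneg)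
      (auto simp: uncovered_def vec.span_empty vec.span_zero)
  finally show ?case
    by (simp add: mult.commute)
qed

lemma prob_span_covers:
  assumes "A \<noteq> {}"
  shows "measure_pmf.prob (Pi_pmf {..<k} d (\<lambda>_. pmf_of_set A)) {v. span_covers A \<epsilon> (v ` {..<k})}
           = 1 - iter_avg A k (uncovered A \<epsilon>) {}"
proof -
  let ?P = "Pi_pmf {..<k} d (\<lambda>_. pmf_of_set A)"
  let ?X = "{v. span_covers A \<epsilon> (v ` {..<k})}"
  have "measure_pmf.prob ?P ?X = measure_pmf.expectation ?P (indicator ?X)"
    by simp
  also have "indicator ?X = (\<lambda>v. of_bool (span_covers A \<epsilon> ({} \<union> v ` {..<k})))"
    by (auto simp: indicator_def)
  also have "measure_pmf.expectation ?P \<dots> = iter_avg A k (\<lambda>T. of_bool (span_covers A \<epsilon> T)) {}"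
    by (rule expectation_Pi_pmf_of_set[OF finite assms])
  also have "(\<lambda>T. of_bool (span_covers A \<epsilon> T)) = (\<lambda>T. 1 - uncovered A \<epsilon> T)"
    by (auto simp: uncovered_def)
  finally show ?thesis
    using assms by (simp add: iter_avg_diff iter_avg_const)
qed

lemma half_power_ceiling_log_le:
  assumes "\<delta> > 0"
  shows "(1 / 2 :: real) ^ nat \<lceil>log 2 (1 / \<delta>)\<rceil> \<le> \<delta>"
proof -
  have "1 / \<delta> = 2 powr log 2 (1 / \<delta>)"
    using assms by simp
  also have "\<dots> \<le> 2 powr real (nat \<lceil>log 2 (1 / \<delta>)\<rceil>)"
    by (intro powr_mono) linarith+
  finally show ?thesis
    using assms by (simp add: powr_realpow power_one_over field_simps)
qed

theorem lemma5p5: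
  fixes A :: "(bit ^ 'n) set" and \<epsilon> \<delta> :: real
  assumes "\<epsilon> > 0" and "\<delta> > 0" and "A \<noteq> {}"
  defines "m \<equiv> log 2 (real (card (vec.span A)))"
  defines "k \<equiv> nat (\<lceil>2 * m / \<epsilon>\<rceil> * \<lceil>log 2 (1 / \<delta>)\<rceil>)"
  shows "measure_pmf.prob (Pi_pmf {..<k} 0 (\<lambda>_. pmf_of_set A))
           {v. real (card (A \<inter> vec.span (v ` {..<k}))) \<ge> (1 - \<epsilon>) * real (card A)}
         \<ge> 1 - \<delta>"
proof -
  define s where "s = nat \<lceil>2 * m / \<epsilon>\<rceil>"
  define r where "r = nat \<lceil>log 2 (1 / \<delta>)\<rceil>"
  let ?p = "iter_avg A s (uncovered A \<epsilon>) {}"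
  have "m \<ge> 0"
    using card_span_pos[of A] unfolding m_def by simp
  then have "0 \<le> 2 * m / \<epsilon>"
    using assms(1) by simp
  then have "\<lceil>2 * m / \<epsilon>\<rceil> \<ge> 0"
    by simp
  then have "k = s * r"
    unfolding k_def s_def r_def by (simp add: nat_mult_distrib)
  then have "iter_avg A k (uncovered A \<epsilon>) {} \<le> ?p ^ r"
    using iter_avg_uncovered_blocks[OF assms(3)] by simp
  also have "\<dots> \<le> (1 / 2) ^ r"
  proof (intro power_mono iter_avg_nonneg)
    show "?p \<le> 1 / 2"
      using assms(3,1) real_nat_ceiling_ge unfolding s_def m_def
      by (rule iter_avg_uncovered_le_half)
  qed (simp add: uncovered_def)
  also have "\<dots> \<le> \<delta>"
    unfolding r_def using assms(2) by (rule half_power_ceiling_log_le)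
  finally show ?thesis
    using prob_span_covers[OF assms(3), of k 0 \<epsilon>] by (simp add: span_covers_def)
qed

end
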